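(* Let $V$ be a topological real vector space and $f:V\to\mathbb{R}$ a non-negative function that is positively homogeneous ($f(\lambda x)=\lambda f(x)$ for all $x\in V$, $\lambda>0$). Then for any real number $\alpha>1$ the following are equivalent: (1) $f$ is continuous and $f^{\alpha}$ is strictly convex. (2) $f$ is continuous and strictly quasi-convex. (3) $f$ is strictly sub-convex and $f^{-1}(0)=\{0\}$.
   Context: Topological real vector spaces are not assumed Hausdorff. A function $g$ on a convex set $C$ is strictly convex if $g((1-t)x+ty)<(1-t)g(x)+tg(y)$ for all distinct $x,y\in C$, $t\in(0,1)$; it is strictly quasi-convex if $g((1-t)x+ty)<\max\{g(x),g(y)\}$ for all distinct $x,y\in C$, $t\in(0,1)$. For $f:C\to\mathbb{R}$ and $r\in\mathbb{R}$, $S_r(f)=\{x\in C: f(x)\le r\}$. For a subset $S$, $\mathrm{Aff}(S)$ is its affine hull; $\mathrm{ri}(S)$ and $\mathrm{rc}(S)$ are the interior and closure of $S$ in the subspace topology of $\mathrm{Aff}(S)$. $]x,y[=\{(1-t)x+ty: t\in[0,1]\}\setminus\{x,y\}$. A subset $C$ is strictly convex if for any two distinct $x,y\in\mathrm{rc}(C)$ one has $]x,y[\subseteq\mathrm{ri}(C)$. A function $f:C\to\mathbb{R}$ is strictly sub-convex if $S_r(f)$ is strictly convex for every $r\in\mathbb{R}$. *)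

theory Defs
  imports "HOL-Analysis.Analysis"
begin

text \<open>A topological real vector space (not assumed Hausdorff): the ambient type carries
 a real vector space structure and a topology for which addition and scalar
 multiplication are jointly continuous (w.r.t. the product topologies).\<close>
definition tvs :: "'a::{real_vector,topological_space} itself \<Rightarrow> bool" where
  "tvs _ \<longleftrightarrow> continuous_on UNIV (\<lambda>p::'a \<times> 'a. fst p + snd p)
            \<and> continuous_on UNIV (\<lambda>p::real \<times> 'a. fst p *\<^sub>R snd p)"

definition strictly_convex_on :: "'a::real_vector set \<Rightarrow> ('a \<Rightarrow> real) \<Rightarrow> bool" where
  "strictly_convex_on C g \<longleftrightarrow> (\<forall>x\<in>C. \<forall>y\<in>C. x \<noteq> y \<longrightarrow> (\<forall>t::real. 0 < t \<and> t < 1 \<longrightarrow>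
      g ((1 - t) *\<^sub>R x + t *\<^sub>R y) < (1 - t) * g x + t * g y))"

definition strictly_quasi_convex_on :: "'a::real_vector set \<Rightarrow> ('a \<Rightarrow> real) \<Rightarrow> bool" where
  "strictly_quasi_convex_on C g \<longleftrightarrow> (\<forall>x\<in>C. \<forall>y\<in>C. x \<noteq> y \<longrightarrow> (\<forall>t::real. 0 < t \<and> t < 1 \<longrightarrow>
      g ((1 - t) *\<^sub>R x + t *\<^sub>R y) < max (g x) (g y)))"

definition sublevel :: "'a set \<Rightarrow> ('a \<Rightarrow> real) \<Rightarrow> real \<Rightarrow> 'a set" where
  "sublevel C f r = {x \<in> C. f x \<le> r}"

definition rel_closure :: "'a::{real_vector,topological_space} set \<Rightarrow> 'a set" where
  "rel_closure S = (top_of_set (affine hull S)) closure_of S"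

definition strictly_convex_set :: "'a::{real_vector,topological_space} set \<Rightarrow> bool" where
  "strictly_convex_set C \<longleftrightarrow> (\<forall>x\<in>rel_closure C. \<forall>y\<in>rel_closure C. x \<noteq> y \<longrightarrow>
      open_segment x y \<subseteq> rel_interior C)"

definition strictly_sub_convex_on :: "'a::{real_vector,topological_space} set \<Rightarrow> ('a \<Rightarrow> real) \<Rightarrow> bool" where
  "strictly_sub_convex_on C f \<longleftrightarrow> (\<forall>r. strictly_convex_set (sublevel C f r))"

end

theory Submission
  imports Defs
begin

text \<open>(1) \<open>\<Rightarrow>\<close> (2) is monotonicity of \<open>t \<mapsto> t\<^sup>\<alpha>\<close>. For (2) \<open>\<Rightarrow>\<close> (1), positive homogeneity
  turns quasi-convexity into convexity of \<open>f\<close>; then \<open>f\<^sup>\<alpha>\<close> is strictly convex, by strict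
  quasi-convexity on segments where \<open>f x = f y\<close> and by strict convexity of \<open>t \<mapsto> t\<^sup>\<alpha>\<close>
  elsewhere. For \<open>r > 0\<close> the sublevel set \<open>S\<^sub>r\<close> spans the whole space, so its relative
  interior and closure are the ordinary ones. Under (2), \<open>{f < r}\<close> is an open subset of
  \<open>S\<^sub>r\<close> containing every open segment between points of \<open>S\<^sub>r\<close>. Under (3), joining a
  point of the closure of \<open>S\<^sub>r\<close> to \<open>0\<close> shows that \<open>S\<^sub>r\<close> is closed, and every \<open>z\<close> with
  \<open>f z < r\<close> lies on an open segment with end points in \<open>S\<^sub>r\<close>, hence in its interior;
  together these give continuity. Finally, an interior point \<open>z\<close> of \<open>S\<^sub>M\<close> can be
  stretched to \<open>(1 + \<epsilon>) z \<in> S\<^sub>M\<close> by continuity of scalar multiplication, so \<open>f z < M\<close>,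
  which is strict quasi-convexity.\<close>

lemma powr_gt_tangent_line:
  fixes a m s :: real
  assumes a: "1 < a" and m: "0 < m" and s: "0 \<le> s" "s \<noteq> m"
  shows "m powr a + a * m powr (a - 1) * (s - m) < s powr a"
proof -
  define g where "g x = x powr a - a * m powr (a - 1) * x" for x
  have g': "DERIV g x :> a * (x powr (a - 1) - m powr (a - 1))" if "0 < x" for x
    unfolding g_def using that by (auto intro!: derivative_eq_intros simp: algebra_simps)
  have cont: "continuous_on {0..} g"
    unfolding g_def using a by (intro continuous_intros continuous_on_powr') auto
  have "g m < g s"
  proof (cases "m < s")
    case True
    show ?thesis
    proof (rule DERIV_pos_imp_increasing_open[OF True])
      fix x assume x: "m < x" "x < s"
      then have "m powr (a - 1) < x powr (a - 1)"
        using a m by (intro powr_less_mono2) auto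
      then show "\<exists>y. DERIV g x :> y \<and> 0 < y"
        using g' x m a by (intro exI[of _ "a * (x powr (a - 1) - m powr (a - 1))"]) auto
    qed (use cont m in \<open>auto intro: continuous_on_subset\<close>)
  next
    case False
    with s have "s < m" by simp
    show ?thesis
    proof (rule DERIV_neg_imp_decreasing_open[OF \<open>s < m\<close>])
      fix x assume x: "s < x" "x < m"
      then have "x powr (a - 1) < m powr (a - 1)"
        using a s by (intro powr_less_mono2) auto
      then show "\<exists>y. DERIV g x :> y \<and> y < 0"
        using g' x s a
        by (intro exI[of _ "a * (x powr (a - 1) - m powr (a - 1))"]) (auto intro: mult_pos_neg)
    qed (use cont s in \<open>auto intro: continuous_on_subset\<close>)
  qed
  moreover have "m powr (a - 1) * m = m powr a"
    using m by (simp add: powr_diff)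
  ultimately show ?thesis
    unfolding g_def by (simp add: algebra_simps)
qed

lemma powr_convex_combination_less:
  fixes a p q t :: real
  assumes a: "1 < a" and pq: "0 \<le> p" "0 \<le> q" "p \<noteq> q" and t: "0 < t" "t < 1"
  shows "((1 - t) * p + t * q) powr a < (1 - t) * p powr a + t * q powr a"
proof -
  define m where "m = (1 - t) * p + t * q"
  define c where "c = a * m powr (a - 1)"
  have "0 < m"
    unfolding m_def using pq t
    by (smt (verit) mult_nonneg_nonneg mult_pos_pos)
  have "p - m = t * (p - q)" "q - m = (1 - t) * (q - p)"
    unfolding m_def by (simp_all add: algebra_simps)
  then have "p \<noteq> m" "q \<noteq> m"
    using pq t by auto
  with \<open>0 < m\<close> have "m powr a + c * (p - m) < p powr a" "m powr a + c * (q - m) < q powr a"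
    unfolding c_def using powr_gt_tangent_line a pq by auto
  then have "(1 - t) * (m powr a + c * (p - m)) + t * (m powr a + c * (q - m))
      < (1 - t) * p powr a + t * q powr a"
    using t by (intro add_strict_mono mult_strict_left_mono) auto
  moreover have "(1 - t) * (m powr a + c * (p - m)) + t * (m powr a + c * (q - m)) = m powr a"
    unfolding m_def by (simp add: algebra_simps)
  ultimately show ?thesis
    unfolding m_def by simp
qed

lemma strictly_quasi_convex_onD_le:
  assumes "strictly_quasi_convex_on UNIV g" "0 \<le> t" "t \<le> 1"
  shows "g ((1 - t) *\<^sub>R x + t *\<^sub>R y) \<le> max (g x) (g y)"
proof (cases "x = y \<or> t = 0 \<or> t = 1")
  case True
  then show ?thesis
    by (auto simp: scaleR_collapse)
next
  case False
  then show ?thesis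
    using assms unfolding strictly_quasi_convex_on_def by (simp add: less_imp_le)
qed

lemma strictly_quasi_convex_if_strictly_convex_powr:
  fixes g :: "'a::real_vector \<Rightarrow> real"
  assumes a: "0 < a" and nonneg: "\<And>x. 0 \<le> g x"
    and convex: "strictly_convex_on UNIV (\<lambda>x. g x powr a)"
  shows "strictly_quasi_convex_on UNIV g"
  unfolding strictly_quasi_convex_on_def
proof (intro ballI impI allI)
  fix x y :: 'a and t :: real
  assume "x \<noteq> y" and t: "0 < t \<and> t < 1"
  define z where "z = (1 - t) *\<^sub>R x + t *\<^sub>R y"
  define M where "M = max (g x) (g y)"
  have "0 \<le> M" "g x \<le> M" "g y \<le> M"
    unfolding M_def using nonneg by (auto intro: le_max_iff_disj[THEN iffD2])
  have "g x powr a \<le> M powr a" "g y powr a \<le> M powr a"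
    using \<open>g x \<le> M\<close> \<open>g y \<le> M\<close> a nonneg by (simp_all add: powr_mono2)
  then have "(1 - t) * g x powr a + t * g y powr a \<le> M powr a"
    using t by (intro convex_bound_le) auto
  moreover have "g z powr a < (1 - t) * g x powr a + t * g y powr a"
    using convex \<open>x \<noteq> y\<close> t unfolding strictly_convex_on_def z_def by blast
  ultimately have "g z powr a < M powr a"
    by linarith
  then show "g z < max (g x) (g y)"
    unfolding M_def[symmetric] using a \<open>0 \<le> M\<close> powr_mono2[of a M "g z"] by fastforce
qed

locale nonneg_homogeneous =
  fixes f :: "'a::real_vector \<Rightarrow> real"
  assumes nonneg: "0 \<le> f x"
    and homogeneous: "0 < c \<Longrightarrow> f (c *\<^sub>R x) = c * f x"
begin

lemma zero [simp]: "f 0 = 0"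
  using homogeneous[of 2 0] by simp

lemma sublevel_eq [simp]: "sublevel UNIV f r = {x. f x \<le> r}"
  by (simp add: sublevel_def)

lemma zero_iff_if_strictly_quasi_convex:
  assumes "strictly_quasi_convex_on UNIV f"
  shows "f x = 0 \<longleftrightarrow> x = 0"
proof
  assume "f x = 0"
  show "x = 0"
  proof (rule ccontr)
    assume "x \<noteq> 0"
    then have "f ((1 - 1/2) *\<^sub>R 0 + (1/2::real) *\<^sub>R x) < max (f 0) (f x)"
      using assms[unfolded strictly_quasi_convex_on_def, rule_format, of 0 x "1/2"] by simp
    moreover have "f ((1 - 1/2) *\<^sub>R 0 + (1/2::real) *\<^sub>R x) = f x / 2"
      using homogeneous[of "1/2" x] by simp
    ultimately show False
      using \<open>f x = 0\<close> by simp
  qed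
qed simp

text \<open>The gauge argument: \<open>x + y\<close> is \<open>p + q\<close> times a convex combination of the
  points \<open>x / p\<close> and \<open>y / q\<close> of level at most \<open>1\<close>; padding \<open>p \<ge> f x\<close>, \<open>q \<ge> f y\<close>
  by \<open>e / 2\<close> keeps them positive even where \<open>f\<close> vanishes.\<close>
lemma subadditive_if_quasi_convex:
  assumes quasi_convex: "\<And>x y t. 0 \<le> t \<Longrightarrow> t \<le> 1 \<Longrightarrow>
      f ((1 - t) *\<^sub>R x + t *\<^sub>R y) \<le> max (f x) (f y)"
  shows "f (x + y) \<le> f x + f y"
proof (rule field_le_epsilon)
  fix e :: real
  assume "0 < e"
  define p q where "p = f x + e / 2" and "q = f y + e / 2"
  define t where "t = q / (p + q)"
  have pq: "0 < p" "0 < q"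
    unfolding p_def q_def using nonneg \<open>0 < e\<close> by (auto intro: add_nonneg_pos)
  then have t: "0 \<le> t" "t \<le> 1" "1 - t = p / (p + q)"
    unfolding t_def by (auto simp: field_simps)
  have "x + y = (p + q) *\<^sub>R ((1 - t) *\<^sub>R ((1 / p) *\<^sub>R x) + t *\<^sub>R ((1 / q) *\<^sub>R y))"
    using pq t(3) by (simp add: t_def scaleR_add_right)
  then have "f (x + y) = (p + q) * f ((1 - t) *\<^sub>R ((1 / p) *\<^sub>R x) + t *\<^sub>R ((1 / q) *\<^sub>R y))"
    using pq homogeneous by (metis add_pos_pos)
  also have "\<dots> \<le> (p + q) * max (f ((1 / p) *\<^sub>R x)) (f ((1 / q) *\<^sub>R y))"
    by (rule mult_left_mono[OF quasi_convex[OF t(1,2)]]) (use pq in simp)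
  also have "\<dots> \<le> (p + q) * 1"
    using pq homogeneous \<open>0 < e\<close> by (intro mult_left_mono) (auto simp: p_def q_def)
  finally show "f (x + y) \<le> f x + f y + e"
    by (simp add: p_def q_def)
qed

lemma convex_on_if_strictly_quasi_convex:
  assumes "strictly_quasi_convex_on UNIV f"
  shows "convex_on UNIV f"
proof (rule convex_onI)
  fix t :: real and x y
  assume "0 < t" "t < 1"
  have "f ((1 - t) *\<^sub>R x + t *\<^sub>R y) \<le> f ((1 - t) *\<^sub>R x) + f (t *\<^sub>R y)"
    by (rule subadditive_if_quasi_convex[OF strictly_quasi_convex_onD_le[OF assms]])
  then show "f ((1 - t) *\<^sub>R x + t *\<^sub>R y) \<le> (1 - t) * f x + t * f y"
    using \<open>0 < t\<close> \<open>t < 1\<close> homogeneous by simp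
qed simp

lemma strictly_convex_powr_if_strictly_quasi_convex:
  assumes a: "1 < a" and quasi_convex: "strictly_quasi_convex_on UNIV f"
  shows "strictly_convex_on UNIV (\<lambda>x. f x powr a)"
  unfolding strictly_convex_on_def
proof (intro ballI impI allI)
  fix x y :: 'a and t :: real
  assume "x \<noteq> y" and t: "0 < t \<and> t < 1"
  define z where "z = (1 - t) *\<^sub>R x + t *\<^sub>R y"
  show "f z powr a < (1 - t) * f x powr a + t * f y powr a"
  proof (cases "f x = f y")
    case True
    have "f z < max (f x) (f y)"
      using quasi_convex \<open>x \<noteq> y\<close> t unfolding strictly_quasi_convex_on_def z_def by blast
    then have "f z < f x"
      using True by simp
    then have "f z powr a < f x powr a"
      using nonneg a by (intro powr_less_mono2) auto
    then show ?thesis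
      using True by (simp add: algebra_simps)
  next
    case False
    have "f z \<le> (1 - t) * f x + t * f y"
      using convex_on_if_strictly_quasi_convex[OF quasi_convex] t unfolding z_def
      by (intro convex_onD) auto
    then have "f z powr a \<le> ((1 - t) * f x + t * f y) powr a"
      using nonneg a by (intro powr_mono2) auto
    also have "\<dots> < (1 - t) * f x powr a + t * f y powr a"
      by (rule powr_convex_combination_less) (use a nonneg False t in auto)
    finally show ?thesis .
  qed
qed

lemma affine_hull_sublevel:
  assumes "0 < r"
  shows "affine hull (sublevel UNIV f r) = UNIV"
proof -
  have "v \<in> affine hull (sublevel UNIV f r)" for v
  proof -
    define c where "c = 1 + f v / r"
    have c: "0 < c"
      unfolding c_def using assms nonneg by (simp add: add_pos_nonneg)
    have "f ((1 / c) *\<^sub>R v) \<le> r"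
      using c assms homogeneous nonneg by (simp add: c_def field_simps)
    then have "(1 - c) *\<^sub>R 0 + c *\<^sub>R ((1 / c) *\<^sub>R v) \<in> affine hull (sublevel UNIV f r)"
      using assms by (intro mem_affine[OF affine_affine_hull] hull_inc) auto
    then show ?thesis
      using c by simp
  qed
  then show ?thesis
    by auto
qed

end

lemma continuous_on_scaleR_left_if_tvs:
  fixes z :: "'a::{real_vector,topological_space}"
  assumes "tvs TYPE('a)"
  shows "continuous_on UNIV (\<lambda>c::real. c *\<^sub>R z)"
proof -
  have "continuous_on UNIV ((\<lambda>p::real \<times> 'a. fst p *\<^sub>R snd p) \<circ> (\<lambda>c. (c, z)))"
    using assms unfolding tvs_def
    by (intro continuous_on_compose continuous_intros) (auto intro: continuous_on_subset)
  then show ?thesis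
    by (simp add: o_def)
qed

lemma continuous_on_UNIV_iff_open_less_closed_le:
  fixes g :: "'a::topological_space \<Rightarrow> real"
  shows "continuous_on UNIV g \<longleftrightarrow> (\<forall>a. open {x. g x < a}) \<and> (\<forall>a. closed {x. g x \<le> a})"
  using continuous_map_upper_lower_semicontinuous_lte[of euclidean g] by simp

lemma rel_interior_eq_interior_if_affine_hull_UNIV:
  assumes "affine hull S = UNIV"
  shows "rel_interior S = interior S"
  using assms unfolding rel_interior interior_def by auto

lemma rel_closure_eq_closure_if_affine_hull_UNIV:
  assumes "affine hull S = UNIV"
  shows "rel_closure S = closure S"
  using assms unfolding rel_closure_def by simp

lemma strictly_convex_set_iff_if_affine_hull_UNIV:
  assumes "affine hull S = UNIV"
  shows "strictly_convex_set S \<longleftrightarrow>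
    (\<forall>x\<in>closure S. \<forall>y\<in>closure S. x \<noteq> y \<longrightarrow> open_segment x y \<subseteq> interior S)"
  unfolding strictly_convex_set_def rel_interior_eq_interior_if_affine_hull_UNIV[OF assms]
    rel_closure_eq_closure_if_affine_hull_UNIV[OF assms] ..

lemma strictly_convex_set_if_subset_sing:
  assumes "S \<subseteq> {a}"
  shows "strictly_convex_set S"
proof -
  have "rel_closure S \<subseteq> affine hull S"
    unfolding rel_closure_def using closure_of_subset_topspace by fastforce
  also have "affine hull S \<subseteq> {a}"
    using assms by (intro hull_minimal) (auto simp: affine_sing)
  finally show ?thesis
    unfolding strictly_convex_set_def by blast
qed

locale topological_nonneg_homogeneous = nonneg_homogeneous f
  for f :: "'a::{real_vector,topological_space} \<Rightarrow> real"
begin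

lemma mem_closure_sublevel: "f x \<le> r \<Longrightarrow> x \<in> closure (sublevel UNIV f r)"
  using closure_subset by fastforce

lemma strictly_sub_convex_if_continuous_strictly_quasi_convex:
  assumes cont: "continuous_on UNIV f" and quasi_convex: "strictly_quasi_convex_on UNIV f"
  shows "strictly_sub_convex_on UNIV f"
  unfolding strictly_sub_convex_on_def
proof
  fix r
  show "strictly_convex_set (sublevel UNIV f r)"
  proof (cases "0 < r")
    case False
    have "sublevel UNIV f r \<subseteq> {0}"
    proof
      fix x
      assume "x \<in> sublevel UNIV f r"
      then have "f x = 0"
        using nonneg[of x] False by simp
      then show "x \<in> {0}"
        using zero_iff_if_strictly_quasi_convex[OF quasi_convex] by simp
    qed
    then show ?thesis
      by (rule strictly_convex_set_if_subset_sing)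
  next
    case True
    have closed: "closed (sublevel UNIV f r)" and "open {x. f x < r}"
      using cont by (auto intro!: closed_Collect_le open_Collect_less continuous_on_const)
    show ?thesis
      unfolding strictly_convex_set_iff_if_affine_hull_UNIV[OF affine_hull_sublevel[OF True]]
        closure_closed[OF closed]
    proof (intro ballI impI subsetI)
      fix x y z
      assume "x \<in> sublevel UNIV f r" "y \<in> sublevel UNIV f r" "x \<noteq> y" "z \<in> open_segment x y"
      then have "f z < max (f x) (f y)" "max (f x) (f y) \<le> r"
        using quasi_convex unfolding strictly_quasi_convex_on_def in_segment by auto
      then show "z \<in> interior (sublevel UNIV f r)"
        using \<open>open {x. f x < r}\<close> by (intro interiorI[of "{x. f x < r}"]) auto
    qed
  qed
qed

lemma less_if_mem_interior_sublevel:
  assumes tvs: "tvs TYPE('a)" and "0 < M" and z: "z \<in> interior (sublevel UNIV f M)"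
  shows "f z < M"
proof -
  obtain U where U: "open U" "z \<in> U" "U \<subseteq> sublevel UNIV f M"
    using z by (rule interiorE)
  have "open ((\<lambda>c::real. c *\<^sub>R z) -` U)"
    using continuous_on_scaleR_left_if_tvs[OF tvs] U(1) by (simp add: open_vimage)
  moreover have "1 \<in> (\<lambda>c::real. c *\<^sub>R z) -` U"
    using U(2) by simp
  ultimately obtain e where "0 < e" and e: "ball 1 e \<subseteq> (\<lambda>c::real. c *\<^sub>R z) -` U"
    by (rule openE)
  have "1 + e / 2 \<in> ball 1 e"
    using \<open>0 < e\<close> by (simp add: dist_real_def)
  then have "f ((1 + e / 2) *\<^sub>R z) \<le> M"
    using e U(3) by auto
  moreover have "f ((1 + e / 2) *\<^sub>R z) = f z + e / 2 * f z"
    using homogeneous[of "1 + e / 2" z] \<open>0 < e\<close> by (simp add: distrib_right)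
  moreover have "0 < e / 2 * f z" if "M \<le> f z"
    using that \<open>0 < M\<close> \<open>0 < e\<close> by simp
  ultimately show "f z < M"
    by linarith
qed

context
  assumes strictly_sub_convex: "strictly_sub_convex_on UNIV f"
    and eq_zero: "f x = 0 \<Longrightarrow> x = 0"
begin

lemma open_segment_subset_interior_sublevel:
  assumes "0 < r" and "x \<in> closure (sublevel UNIV f r)" "y \<in> closure (sublevel UNIV f r)" "x \<noteq> y"
  shows "open_segment x y \<subseteq> interior (sublevel UNIV f r)"
  using strictly_sub_convex assms(2-4)
    strictly_convex_set_iff_if_affine_hull_UNIV[OF affine_hull_sublevel[OF \<open>0 < r\<close>]]
  unfolding strictly_sub_convex_on_def by blast

lemma closed_sublevel_pos:
  assumes "0 < r"
  shows "closed (sublevel UNIV f r)"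
proof -
  have "f x \<le> r" if x: "x \<in> closure (sublevel UNIV f r)" for x
  proof (rule ccontr)
    assume "\<not> f x \<le> r"
    then have "r < f x" "x \<noteq> 0"
      using assms by auto
    define u where "u = (1 + r / f x) / 2"
    have u: "0 < u" "u < 1" "r < u * f x"
      using \<open>r < f x\<close> assms unfolding u_def by (auto simp: field_simps)
    have "u *\<^sub>R x \<in> open_segment 0 x"
      using u \<open>x \<noteq> 0\<close> unfolding in_segment by (intro conjI exI[of _ u]) auto
    moreover have "0 \<in> closure (sublevel UNIV f r)"
      using assms by (intro mem_closure_sublevel) simp
    ultimately have "u *\<^sub>R x \<in> interior (sublevel UNIV f r)"
      using open_segment_subset_interior_sublevel[OF assms _ x] \<open>x \<noteq> 0\<close> by auto
    then have "u *\<^sub>R x \<in> sublevel UNIV f r"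
      using interior_subset by blast
    then have "u * f x \<le> r"
      using homogeneous \<open>0 < u\<close> by simp
    with u show False
      by linarith
  qed
  then have "closure (sublevel UNIV f r) \<subseteq> sublevel UNIV f r"
    by (intro subsetI) (simp only: sublevel_eq mem_Collect_eq)
  then show ?thesis
    by (simp only: closure_subset_eq)
qed

text \<open>The case \<open>r = 0\<close> needs the intersection: \<open>{0}\<close> need not be closed in a
  non-Hausdorff space.\<close>
lemma closed_sublevel: "closed (sublevel UNIV f r)"
proof (cases "r < 0")
  case True
  then have "sublevel UNIV f r = {}"
    using nonneg by (auto simp: not_le intro: less_le_trans)
  then show ?thesis
    by simp
next
  case False
  have "sublevel UNIV f r = (\<Inter>s\<in>{r<..}. sublevel UNIV f s)"
    by (auto intro: dense_ge)
  moreover have "closed (\<Inter>s\<in>{r<..}. sublevel UNIV f s)"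
    using False by (intro closed_INT ballI closed_sublevel_pos) auto
  ultimately show ?thesis
    by simp
qed

lemma zero_mem_interior_sublevel:
  assumes "0 < s"
  shows "0 \<in> interior (sublevel UNIV f s)"
proof (cases "\<exists>v::'a. v \<noteq> 0")
  case False
  then have "f x \<le> s" for x
    using assms by (metis zero less_imp_le)
  then have "sublevel UNIV f s = UNIV"
    by auto
  then show ?thesis
    by simp
next
  case True
  then obtain v :: 'a where "v \<noteq> 0"
    by blast
  then have pos: "0 < f v" "0 < f (- v)"
    using nonneg eq_zero by (metis less_eq_real_def neg_equal_0_iff_equal)+
  define c where "c = s / (f v + f (- v))"
  have "0 < c" and c: "c * (f v + f (- v)) = s"
    using pos assms unfolding c_def by simp_all
  define w where "w = c *\<^sub>R v"
  have "f w = c * f v" "f (- w) = c * f (- v)"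
    using \<open>0 < c\<close> homogeneous unfolding w_def by (simp_all flip: scaleR_minus_right)
  moreover have "0 < c * f v" "0 < c * f (- v)"
    using \<open>0 < c\<close> pos by simp_all
  ultimately have "f w \<le> s" "f (- w) \<le> s"
    using c unfolding distrib_left by linarith+
  moreover have "w \<noteq> - w"
  proof
    assume "w = - w"
    then have "(c + c) *\<^sub>R v = 0"
      unfolding w_def scaleR_add_left by (metis add.right_inverse)
    then show False
      using \<open>0 < c\<close> \<open>v \<noteq> 0\<close> by simp
  qed
  moreover have "0 \<in> open_segment w (- w)"
    using \<open>w \<noteq> - w\<close> unfolding in_segment by (intro conjI exI[of _ "1 / 2"]) auto
  ultimately show ?thesis
    using open_segment_subset_interior_sublevel[OF assms mem_closure_sublevel mem_closure_sublevel]
    by blast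
qed

lemma mem_interior_sublevel:
  assumes "f z < s"
  shows "z \<in> interior (sublevel UNIV f s)"
proof (cases "z = 0")
  case True
  then show ?thesis
    using zero_mem_interior_sublevel assms by simp
next
  case False
  then have "0 < f z"
    using nonneg eq_zero by (metis less_eq_real_def)
  define w where "w = (s / f z) *\<^sub>R z"
  have "f w = s" "0 < s"
    using \<open>0 < f z\<close> assms homogeneous unfolding w_def by simp_all
  then have "w \<noteq> 0"
    by auto
  have "z \<in> open_segment 0 w"
    unfolding in_segment
  proof (intro conjI exI[of _ "f z / s"])
    show "z = (1 - f z / s) *\<^sub>R 0 + (f z / s) *\<^sub>R w"
      using \<open>0 < f z\<close> \<open>0 < s\<close> unfolding w_def by simp
  qed (use \<open>w \<noteq> 0\<close> \<open>0 < f z\<close> assms in auto)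
  moreover have "0 \<in> closure (sublevel UNIV f s)" "w \<in> closure (sublevel UNIV f s)"
    using \<open>f w = s\<close> \<open>0 < s\<close> by (intro mem_closure_sublevel; simp)+
  ultimately show ?thesis
    using open_segment_subset_interior_sublevel[OF \<open>0 < s\<close>] \<open>w \<noteq> 0\<close> by blast
qed

lemma continuous_if_strictly_sub_convex: "continuous_on UNIV f"
  unfolding continuous_on_UNIV_iff_open_less_closed_le
proof (intro conjI allI)
  fix a
  show "closed {x. f x \<le> a}"
    using closed_sublevel by simp
  have "{x. f x < a} = (\<Union>s\<in>{..<a}. interior (sublevel UNIV f s))"
  proof (intro equalityI subsetI)
    fix x
    assume "x \<in> {x. f x < a}"
    then have "f x < (f x + a) / 2" "(f x + a) / 2 < a"
      by simp_all
    then have "x \<in> interior (sublevel UNIV f ((f x + a) / 2))" "(f x + a) / 2 < a"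
      by (simp_all only: mem_interior_sublevel)
    then show "x \<in> (\<Union>s\<in>{..<a}. interior (sublevel UNIV f s))"
      by blast
  next
    fix x
    assume "x \<in> (\<Union>s\<in>{..<a}. interior (sublevel UNIV f s))"
    then show "x \<in> {x. f x < a}"
      using interior_subset by fastforce
  qed
  then show "open {x. f x < a}"
    by (simp add: open_UN)
qed

lemma strictly_quasi_convex_if_strictly_sub_convex:
  assumes tvs: "tvs TYPE('a)"
  shows "strictly_quasi_convex_on UNIV f"
  unfolding strictly_quasi_convex_on_def
proof (intro ballI impI allI)
  fix x y :: 'a and t :: real
  assume "x \<noteq> y" and t: "0 < t \<and> t < 1"
  define M where "M = max (f x) (f y)"
  have "0 < M"
  proof (rule ccontr)
    assume "\<not> 0 < M"
    then have "f x = 0" "f y = 0"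
      using nonneg[of x] nonneg[of y] unfolding M_def by linarith+
    then have "x = 0" "y = 0"
      using eq_zero by blast+
    with \<open>x \<noteq> y\<close> show False
      by simp
  qed
  have "(1 - t) *\<^sub>R x + t *\<^sub>R y \<in> open_segment x y"
    using \<open>x \<noteq> y\<close> t unfolding in_segment by blast
  moreover have "x \<in> closure (sublevel UNIV f M)" "y \<in> closure (sublevel UNIV f M)"
    unfolding M_def by (intro mem_closure_sublevel; simp)+
  ultimately have "(1 - t) *\<^sub>R x + t *\<^sub>R y \<in> interior (sublevel UNIV f M)"
    using open_segment_subset_interior_sublevel[OF \<open>0 < M\<close> _ _ \<open>x \<noteq> y\<close>] by blast
  then show "f ((1 - t) *\<^sub>R x + t *\<^sub>R y) < max (f x) (f y)"
    using less_if_mem_interior_sublevel[OF tvs \<open>0 < M\<close>] unfolding M_def by blast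
qed

end

end

theorem mainTheorem3:
  fixes f :: "'a::{real_vector,topological_space} \<Rightarrow> real" and \<alpha> :: real
  assumes "tvs TYPE('a)"
    and "\<forall>x. 0 \<le> f x"
    and "\<forall>x. \<forall>c::real. c > 0 \<longrightarrow> f (c *\<^sub>R x) = c * f x"
    and "\<alpha> > 1"
  shows "((continuous_on UNIV f \<and> strictly_convex_on UNIV (\<lambda>x. f x powr \<alpha>))
            \<longleftrightarrow> (continuous_on UNIV f \<and> strictly_quasi_convex_on UNIV f))
       \<and> ((continuous_on UNIV f \<and> strictly_quasi_convex_on UNIV f)
            \<longleftrightarrow> (strictly_sub_convex_on UNIV f \<and> f -` {0} = {0}))"
proof -
  interpret topological_nonneg_homogeneous f
    using assms(2,3) by unfold_locales auto
  have "strictly_convex_on UNIV (\<lambda>x. f x powr \<alpha>) \<longleftrightarrow> strictly_quasi_convex_on UNIV f"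
    using strictly_quasi_convex_if_strictly_convex_powr[of \<alpha> f]
      strictly_convex_powr_if_strictly_quasi_convex[of \<alpha>] assms(2,4) by auto
  moreover have "f -` {0} = {0} \<longleftrightarrow> (\<forall>x. f x = 0 \<longrightarrow> x = 0)"
    by auto
  ultimately show ?thesis
    using strictly_sub_convex_if_continuous_strictly_quasi_convex
      zero_iff_if_strictly_quasi_convex continuous_if_strictly_sub_convex
      strictly_quasi_convex_if_strictly_sub_convex[OF _ _ assms(1)] by blast
qed

end
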